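(* Let $R$ be a commutative ring with identity. (1) If $R$ is semi-complemented, then $R$ is $\pi$-complemented. (2) If $R$ is $\pi$-complemented, then $R$ is almost complemented.
   Context: $\mathfrak{N}(R)$ is the nilradical and $\mathrm{reg}(R)$ the set of regular elements. An element $a$ is complemented if there is $b$ with $ab=0$ and $a+b\in\mathrm{reg}(R)$. $R$ is semi-complemented if every element of $R\setminus\mathfrak{N}(R)$ is complemented; $R$ is $\pi$-complemented if every element has some power $a^n$ ($n\ge1$) that is complemented; $R$ is almost complemented if $R/\mathfrak{N}(R)$ is a complemented ring (every element of it complemented in it). *)

theory Defs
  imports "HOL-Algebra.QuotRing"
begin

definition nilradical :: "('a, 'b) ring_scheme \<Rightarrow> 'a set" where
  "nilradical R = {a \<in> carrier R. \<exists>n::nat. a [^]\<^bsub>R\<^esub> n = \<zero>\<^bsub>R\<^esub>}"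

definition regular_elem :: "('a, 'b) ring_scheme \<Rightarrow> 'a \<Rightarrow> bool" where
  "regular_elem R a \<longleftrightarrow> a \<in> carrier R \<and>
     (\<forall>x \<in> carrier R. a \<otimes>\<^bsub>R\<^esub> x = \<zero>\<^bsub>R\<^esub> \<longrightarrow> x = \<zero>\<^bsub>R\<^esub>)"

definition complemented_elem :: "('a, 'b) ring_scheme \<Rightarrow> 'a \<Rightarrow> bool" where
  "complemented_elem R a \<longleftrightarrow>
     (\<exists>b \<in> carrier R. a \<otimes>\<^bsub>R\<^esub> b = \<zero>\<^bsub>R\<^esub> \<and> regular_elem R (a \<oplus>\<^bsub>R\<^esub> b))"

definition complemented_ring :: "('a, 'b) ring_scheme \<Rightarrow> bool" where
  "complemented_ring R \<longleftrightarrow> (\<forall>a \<in> carrier R. complemented_elem R a)"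

definition semi_complemented :: "('a, 'b) ring_scheme \<Rightarrow> bool" where
  "semi_complemented R \<longleftrightarrow> (\<forall>a \<in> carrier R - nilradical R. complemented_elem R a)"

definition pi_complemented :: "('a, 'b) ring_scheme \<Rightarrow> bool" where
  "pi_complemented R \<longleftrightarrow>
     (\<forall>a \<in> carrier R. \<exists>n::nat. n \<ge> 1 \<and> complemented_elem R (a [^]\<^bsub>R\<^esub> n))"

definition almost_complemented :: "('a, 'b) ring_scheme \<Rightarrow> bool" where
  "almost_complemented R \<longleftrightarrow> complemented_ring (R Quot nilradical R)"

end

theory Submission
  imports Defs
begin

text \<open>
  (1) An element outside the nilradical is complemented by hypothesis, and a nilpotent element
  has a power equal to \<open>0\<close>, which is complemented by \<open>1\<close>.
  (2) Let \<open>a\<^sup>n b = 0\<close> with \<open>a\<^sup>n + b\<close> regular, and work modulo the nilradical \<open>N\<close>.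
  Then \<open>(a b)\<^sup>n = a\<^sup>n b\<^sup>n = 0\<close>, so \<open>a b \<in> N\<close>. If \<open>(a + b) y \<in> N\<close>, multiplying by \<open>a\<close> gives
  \<open>a\<^sup>2 y \<in> N\<close>, hence \<open>(a y)\<^sup>2 \<in> N\<close> and \<open>a y \<in> N\<close>; then \<open>b y \<in> N\<close> and \<open>(a\<^sup>n + b) y \<in> N\<close>.
  A regular element stays regular modulo \<open>N\<close>, so \<open>y \<in> N\<close>: the class of \<open>b\<close> complements
  the class of \<open>a\<close> in \<open>R/N\<close>.
\<close>

lemma (in ideal) rcos_eq_ideal_iff:
  assumes "x \<in> carrier R"
  shows "I +> x = I \<longleftrightarrow> x \<in> I"
  using rcos_const_imp_mem[OF assms] a_rcos_zero[OF is_ideal] by blast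

lemma (in ideal) add_mem_cancel:
  assumes "x \<in> carrier R" "x \<oplus> y \<in> I" "y \<in> I"
  shows "x \<in> I"
proof -
  have "(x \<oplus> y) \<oplus> \<ominus> y \<in> I" using assms by (simp add: a_closed a_inv_closed)
  moreover have "(x \<oplus> y) \<oplus> \<ominus> y = x" using assms Icarr by (simp add: a_assoc r_neg)
  ultimately show ?thesis by simp
qed

lemma (in ideal) complemented_elem_quotientI:
  assumes a: "a \<in> carrier R" and b: "b \<in> carrier R" and ab: "a \<otimes> b \<in> I"
    and regular_mod: "\<And>y. y \<in> carrier R \<Longrightarrow> (a \<oplus> b) \<otimes> y \<in> I \<Longrightarrow> y \<in> I"
  shows "complemented_elem (R Quot I) (I +> a)"
proof -
  let ?S = "R Quot I"
  have hom: "(+>) I \<in> ring_hom R ?S" by (rule rcos_ring_hom)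
  have zero: "\<zero>\<^bsub>?S\<^esub> = I" by (simp add: FactRing_def)
  have class_of: "\<exists>x \<in> carrier R. X = I +> x" if "X \<in> carrier ?S" for X
    using that by (simp add: FactRing_def A_RCOSETS_def')
  have sum: "(I +> a) \<oplus>\<^bsub>?S\<^esub> (I +> b) = I +> (a \<oplus> b)"
    using ring_hom_add[OF hom a b] by simp
  have "regular_elem ?S ((I +> a) \<oplus>\<^bsub>?S\<^esub> (I +> b))"
    unfolding sum regular_elem_def
  proof (intro conjI ballI impI)
    show "I +> (a \<oplus> b) \<in> carrier ?S" using ring_hom_closed[OF hom] a b by simp
  next
    fix Y assume "Y \<in> carrier ?S" and "(I +> (a \<oplus> b)) \<otimes>\<^bsub>?S\<^esub> Y = \<zero>\<^bsub>?S\<^esub>"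
    moreover obtain y where y: "y \<in> carrier R" "Y = I +> y" using class_of[OF \<open>Y \<in> _\<close>] by blast
    ultimately have "I +> ((a \<oplus> b) \<otimes> y) = I"
      using ring_hom_mult[OF hom _ y(1), of "a \<oplus> b"] a b zero by simp
    then have "(a \<oplus> b) \<otimes> y \<in> I" using rcos_eq_ideal_iff a b y(1) by simp
    then have "y \<in> I" by (rule regular_mod[OF y(1)])
    then show "Y = \<zero>\<^bsub>?S\<^esub>" using rcos_eq_ideal_iff[OF y(1)] y(2) zero by simp
  qed
  moreover have "(I +> a) \<otimes>\<^bsub>?S\<^esub> (I +> b) = \<zero>\<^bsub>?S\<^esub>"
    using ring_hom_mult[OF hom a b] rcos_eq_ideal_iff[of "a \<otimes> b"] a b ab zero by simp
  ultimately show ?thesis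
    unfolding complemented_elem_def using ring_hom_closed[OF hom b] by blast
qed

context ring
begin

lemma nat_pow_eq_zero_mono:
  assumes "x \<in> carrier R" "x [^] (m::nat) = \<zero>" "m \<le> k"
  shows "x [^] k = \<zero>"
proof -
  have "x [^] k = x [^] m \<otimes> x [^] (k - m)" using assms(1,3) nat_pow_mult[of x m "k - m"] by simp
  then show ?thesis using assms by simp
qed

lemma regular_elem_nat_pow:
  assumes r: "regular_elem R r"
  shows "regular_elem R (r [^] (n::nat))"
proof (induction n)
  case 0
  show ?case unfolding regular_elem_def by simp
next
  case (Suc n)
  have rc: "r \<in> carrier R" using r unfolding regular_elem_def by blast
  show ?case unfolding regular_elem_def
  proof (intro conjI ballI impI)
    show "r [^] Suc n \<in> carrier R" using rc by simp
  next
    fix x assume x: "x \<in> carrier R" and "r [^] Suc n \<otimes> x = \<zero>"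
    moreover have "r \<otimes> (r [^] n \<otimes> x) = r [^] Suc n \<otimes> x"
      using rc x by (subst nat_pow_Suc2) (simp_all add: m_assoc)
    ultimately have "r \<otimes> (r [^] n \<otimes> x) = \<zero>" by simp
    then have "r [^] n \<otimes> x = \<zero>" using r rc x unfolding regular_elem_def by simp
    then show "x = \<zero>" using Suc.IH x unfolding regular_elem_def by simp
  qed
qed

lemma nat_pow_mem_nilradical_imp_mem:
  assumes "x \<in> carrier R" "x [^] (m::nat) \<in> nilradical R"
  shows "x \<in> nilradical R"
proof -
  obtain k :: nat where "(x [^] m) [^] k = \<zero>" using assms(2) unfolding nilradical_def by auto
  then have "x [^] (m * k) = \<zero>" using assms(1) by (simp add: nat_pow_pow)
  then show ?thesis using assms(1) unfolding nilradical_def by blast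
qed

lemma complemented_elem_zero: "complemented_elem R \<zero>"
  unfolding complemented_elem_def regular_elem_def by (intro bexI[of _ \<one>]) auto

lemma semi_complemented_imp_pi_complemented:
  assumes "semi_complemented R"
  shows "pi_complemented R"
  unfolding pi_complemented_def
proof
  fix a assume a: "a \<in> carrier R"
  show "\<exists>n::nat. n \<ge> 1 \<and> complemented_elem R (a [^] n)"
  proof (cases "a \<in> nilradical R")
    case False
    then have "complemented_elem R a" using assms a unfolding semi_complemented_def by blast
    then show ?thesis using a by (intro exI[of _ "1::nat"]) simp
  next
    case True
    then obtain m :: nat where "a [^] m = \<zero>" unfolding nilradical_def by auto
    then have "a [^] Suc m = \<zero>" using a by simp
    then show ?thesis using complemented_elem_zero by (intro exI[of _ "Suc m"]) simp
  qed
qed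

end

context cring
begin

lemma nilpotent_add:
  assumes x: "x \<in> carrier R" and y: "y \<in> carrier R"
    and xm: "x [^] (m::nat) = \<zero>" and yk: "y [^] (k::nat) = \<zero>"
  shows "(x \<oplus> y) [^] (m + k) = \<zero>"
proof -
  \<comment> \<open>The binomial theorem without coefficients: each factor \<open>x \<oplus> y\<close> raises either the
    power of \<open>x\<close> or that of \<open>y\<close>.\<close>
  have "(x \<oplus> y) [^] n \<otimes> x [^] i \<otimes> y [^] j = \<zero>" if "m + k \<le> i + j + n" for n i j
    using that
  proof (induction n arbitrary: i j)
    case 0
    then consider "m \<le> i" | "k \<le> j" by arith
    then show ?case
    proof cases
      case 1
      then show ?thesis using nat_pow_eq_zero_mono[OF x xm] x y by simp
    next
      case 2
      then show ?thesis using nat_pow_eq_zero_mono[OF y yk] x y by simp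
    qed
  next
    case (Suc n)
    let ?P = "(x \<oplus> y) [^] n"
    have "(x \<oplus> y) [^] Suc n \<otimes> x [^] i \<otimes> y [^] j = ?P \<otimes> (x \<oplus> y) \<otimes> x [^] i \<otimes> y [^] j"
      by simp
    also have "\<dots> = ?P \<otimes> (x \<otimes> x [^] i) \<otimes> y [^] j \<oplus> ?P \<otimes> x [^] i \<otimes> (y \<otimes> y [^] j)"
      using x y by (simp add: l_distr r_distr m_ac)
    also have "\<dots> = ?P \<otimes> x [^] Suc i \<otimes> y [^] j \<oplus> ?P \<otimes> x [^] i \<otimes> y [^] Suc j"
      using x y by (simp add: nat_pow_Suc2[symmetric] del: nat_pow_Suc)
    also have "\<dots> = \<zero>"
      using Suc.IH[of "Suc i" j] Suc.IH[of i "Suc j"] Suc.prems by (simp del: nat_pow_Suc)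
    finally show ?case .
  qed
  from this[of 0 0 "m + k"] show ?thesis using x y by simp
qed

lemma nilpotent_mult:
  assumes "x \<in> carrier R" "r \<in> carrier R" "x [^] (m::nat) = \<zero>"
  shows "(r \<otimes> x) [^] m = \<zero>"
  using nat_pow_distrib[OF assms(2,1), of m] assms by simp

lemma nilradical_ideal: "ideal (nilradical R) R"
proof (rule idealI[OF ring_axioms])
  show "subgroup (nilradical R) (add_monoid R)"
  proof (rule add.subgroupI)
    show "nilradical R \<subseteq> carrier R" unfolding nilradical_def by auto
    have "\<zero> [^] (1::nat) = \<zero>" by simp
    then show "nilradical R \<noteq> {}" unfolding nilradical_def by blast
  next
    fix a assume "a \<in> nilradical R"
    then obtain n :: nat where a: "a \<in> carrier R" "a [^] n = \<zero>" unfolding nilradical_def by auto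
    have "(\<ominus> \<one> \<otimes> a) [^] n = \<zero>" using nilpotent_mult[OF a(1) _ a(2)] by simp
    moreover have "\<ominus> \<one> \<otimes> a = \<ominus> a" using a by (simp add: l_minus)
    ultimately show "\<ominus> a \<in> nilradical R" unfolding nilradical_def using a by auto
  next
    fix a b assume "a \<in> nilradical R" "b \<in> nilradical R"
    then obtain n k :: nat where a: "a \<in> carrier R" "a [^] n = \<zero>" and b: "b \<in> carrier R" "b [^] k = \<zero>"
      unfolding nilradical_def by auto
    then show "a \<oplus> b \<in> nilradical R"
      unfolding nilradical_def using nilpotent_add[OF a(1) b(1) a(2) b(2)] by auto
  qed
next
  fix a x assume a: "a \<in> nilradical R" and x: "x \<in> carrier R"
  then show "x \<otimes> a \<in> nilradical R" unfolding nilradical_def using nilpotent_mult by blast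
  then show "a \<otimes> x \<in> nilradical R" using a x m_comm unfolding nilradical_def by auto
qed

lemma regular_elem_mult_mem_nilradical:
  assumes r: "regular_elem R r" and y: "y \<in> carrier R" and ry: "r \<otimes> y \<in> nilradical R"
  shows "y \<in> nilradical R"
proof -
  have rc: "r \<in> carrier R" using r unfolding regular_elem_def by blast
  obtain m :: nat where "(r \<otimes> y) [^] m = \<zero>" using ry unfolding nilradical_def by auto
  then have "r [^] m \<otimes> y [^] m = \<zero>" using nat_pow_distrib[OF rc y] by simp
  then have "y [^] m = \<zero>" using regular_elem_nat_pow[OF r, of m] y unfolding regular_elem_def by simp
  then show ?thesis using y unfolding nilradical_def by blast
qed

lemma add_mult_mem_nilradical_imp_mult_mem:
  assumes a: "a \<in> carrier R" and b: "b \<in> carrier R" and y: "y \<in> carrier R"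
    and ab: "a \<otimes> b \<in> nilradical R" and sum_y: "(a \<oplus> b) \<otimes> y \<in> nilradical R"
  shows "a \<otimes> y \<in> nilradical R" "b \<otimes> y \<in> nilradical R"
proof -
  interpret N: ideal "nilradical R" R by (rule nilradical_ideal)
  have "a \<otimes> a \<otimes> y \<oplus> a \<otimes> b \<otimes> y = a \<otimes> ((a \<oplus> b) \<otimes> y)"
    using a b y by (simp add: l_distr r_distr m_assoc)
  also have "\<dots> \<in> nilradical R" using sum_y a by (rule N.I_l_closed)
  finally have "a \<otimes> a \<otimes> y \<oplus> a \<otimes> b \<otimes> y \<in> nilradical R" .
  then have "a \<otimes> a \<otimes> y \<in> nilradical R"
    using N.add_mem_cancel N.I_r_closed[OF ab y] a y by (meson m_closed)
  then have "(a \<otimes> a \<otimes> y) \<otimes> y \<in> nilradical R" using y by (rule N.I_r_closed)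
  moreover have "(a \<otimes> a \<otimes> y) \<otimes> y = (a \<otimes> y) [^] (2::nat)"
    using a y by (simp add: numeral_2_eq_2 m_ac)
  ultimately show ay: "a \<otimes> y \<in> nilradical R"
    using nat_pow_mem_nilradical_imp_mem[of "a \<otimes> y" 2] a y by simp
  have "b \<otimes> y \<oplus> a \<otimes> y = (a \<oplus> b) \<otimes> y" using a b y by (simp add: l_distr a_comm)
  then show "b \<otimes> y \<in> nilradical R"
    using N.add_mem_cancel sum_y ay b y by (metis m_closed)
qed

lemma complemented_nat_pow_imp_complemented_mod_nilradical:
  assumes a: "a \<in> carrier R" and n: "n \<ge> 1" and ca: "complemented_elem R (a [^] (n::nat))"
  shows "complemented_elem (R Quot nilradical R) (nilradical R +> a)"
proof -
  interpret N: ideal "nilradical R" R by (rule nilradical_ideal)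
  obtain b where b: "b \<in> carrier R" and anb: "a [^] n \<otimes> b = \<zero>"
    and reg: "regular_elem R (a [^] n \<oplus> b)"
    using ca unfolding complemented_elem_def by blast
  obtain k where k: "n = Suc k" using n by (cases n) auto
  have "(a \<otimes> b) [^] n = (a [^] n \<otimes> b) \<otimes> b [^] k"
    using nat_pow_distrib[OF a b] a b k by (simp add: m_ac)
  then have ab: "a \<otimes> b \<in> nilradical R" using anb a b unfolding nilradical_def by auto
  show ?thesis
  proof (rule N.complemented_elem_quotientI[OF a b ab])
    fix y assume y: "y \<in> carrier R" and "(a \<oplus> b) \<otimes> y \<in> nilradical R"
    then have ay: "a \<otimes> y \<in> nilradical R" and b_y: "b \<otimes> y \<in> nilradical R"
      using add_mult_mem_nilradical_imp_mult_mem[OF a b y ab] by auto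
    have "a [^] n \<otimes> y = a [^] k \<otimes> (a \<otimes> y)" using a y k by (simp add: m_assoc)
    then have "a [^] n \<otimes> y \<in> nilradical R" using N.I_l_closed[OF ay, of "a [^] k"] a by simp
    then have "(a [^] n \<oplus> b) \<otimes> y \<in> nilradical R" using b_y N.a_closed a b y by (simp add: l_distr)
    then show "y \<in> nilradical R" using regular_elem_mult_mem_nilradical[OF reg y] by blast
  qed
qed

lemma pi_complemented_imp_almost_complemented:
  assumes "pi_complemented R"
  shows "almost_complemented R"
  unfolding almost_complemented_def complemented_ring_def
proof
  fix X assume "X \<in> carrier (R Quot nilradical R)"
  then obtain a where a: "a \<in> carrier R" and X: "X = nilradical R +> a"
    by (auto simp: FactRing_def A_RCOSETS_def')
  obtain n :: nat where "n \<ge> 1" "complemented_elem R (a [^] n)"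
    using assms a unfolding pi_complemented_def by blast
  then show "complemented_elem (R Quot nilradical R) X"
    using complemented_nat_pow_imp_complemented_mod_nilradical a X by blast
qed

end

theorem mainTheorem20:
  fixes R :: "('a, 'b) ring_scheme"
  assumes "cring R"
  shows "(semi_complemented R \<longrightarrow> pi_complemented R)
       \<and> (pi_complemented R \<longrightarrow> almost_complemented R)"
  using ring.semi_complemented_imp_pi_complemented[OF cring.axioms(1)[OF assms]]
    cring.pi_complemented_imp_almost_complemented[OF assms] by blast

end
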